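(* Let $\mathcal X$ be a subset of the nonzero elements of a field, let $g:\mathcal X\to\mathcal X$ be a bijection and $f:\mathcal X\times\mathcal X\to\mathcal X$ a function such that the map $S:\mathcal X^2\times\mathcal X^2\to\mathcal X^2\times\mathcal X^2$, $$S(x,X;y,Y)=(u,U;v,V)=\Big(g^{-1}\Big(\frac{g(x)}{f(v,V)}\Big),\;X\frac{f(y,Y)}{f(v,V)};\;g^{-1}\big(Xg(y)\big),\;XY\Big)$$ is well defined, and suppose that $f(u,U)f(v,V)=f(x,X)$ for all $(x,X;y,Y)$, where $(u,U;v,V)=S(x,X;y,Y)$. Then $S$ is a pentagon map.
   Context: Pentagon map: for a set $Y$ (here $Y=\mathcal X^2$) and $S:Y\times Y\to Y\times Y$, set $S_{12}=S\times\mathrm{id}_Y$, $S_{23}=\mathrm{id}_Y\times S$, $S_{13}(y_1,y_2,y_3)=(p,y_2,q)$ with $(p,q)=S(y_1,y_3)$; $S$ is a pentagon map if $S_{12}\circ S_{13}\circ S_{23}=S_{23}\circ S_{12}$ (rightmost applied first). *)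

theory Defs
  imports Main
begin

definition S12 :: "('y \<times> 'y \<Rightarrow> 'y \<times> 'y) \<Rightarrow> 'y \<times> 'y \<times> 'y \<Rightarrow> 'y \<times> 'y \<times> 'y" where
  "S12 S = (\<lambda>(y1, y2, y3). (fst (S (y1, y2)), snd (S (y1, y2)), y3))"

definition S23 :: "('y \<times> 'y \<Rightarrow> 'y \<times> 'y) \<Rightarrow> 'y \<times> 'y \<times> 'y \<Rightarrow> 'y \<times> 'y \<times> 'y" where
  "S23 S = (\<lambda>(y1, y2, y3). (y1, fst (S (y2, y3)), snd (S (y2, y3))))"

definition S13 :: "('y \<times> 'y \<Rightarrow> 'y \<times> 'y) \<Rightarrow> 'y \<times> 'y \<times> 'y \<Rightarrow> 'y \<times> 'y \<times> 'y" where
  "S13 S = (\<lambda>(y1, y2, y3). (fst (S (y1, y3)), y2, snd (S (y1, y3))))"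

definition pentagon_map_on :: "'y set \<Rightarrow> ('y \<times> 'y \<Rightarrow> 'y \<times> 'y) \<Rightarrow> bool" where
  "pentagon_map_on Y S \<longleftrightarrow>
     (\<forall>y1\<in>Y. \<forall>y2\<in>Y. \<forall>y3\<in>Y.
        S12 S (S13 S (S23 S (y1, y2, y3))) = S23 S (S12 S (y1, y2, y3)))"

definition Smap :: "'a set \<Rightarrow> ('a \<Rightarrow> 'a \<Rightarrow> 'a) \<Rightarrow> ('a \<Rightarrow> 'a::field)
                   \<Rightarrow> ('a \<times> 'a) \<times> ('a \<times> 'a) \<Rightarrow> ('a \<times> 'a) \<times> ('a \<times> 'a)" where
  "Smap Xs f g = (\<lambda>((x, X), (y, Y)).
     let v = inv_into Xs g (X * g y);
         V = X * Y
     in ((inv_into Xs g (g x / f v V), X * f y Y / f v V), (v, V)))"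

end

theory Submission
  imports Defs
begin

text \<open>Write \<open>S(p, q) = (p \<triangleleft> q, p \<cdot> q)\<close> (\<open>Sfst\<close> and \<open>Ssnd\<close> below). In the
  coordinates \<open>(g(x), X)\<close> the product reads \<open>(a, X) \<cdot> (b, Y) = (X b, X Y)\<close>, which is
  associative; this is the third component of the pentagon equation. The second component is a
  direct computation in the same coordinates, and the first one holds because the relation
  \<open>f(p \<triangleleft> q) f(p \<cdot> q) = f(p)\<close>, applied to the pairs \<open>(y\<^sub>2, y\<^sub>3)\<close> and
  \<open>(y\<^sub>1 \<cdot> y\<^sub>2, y\<^sub>3)\<close>, makes the factors of \<open>f\<close> created by the two sides cancel.\<close>

lemma pentagon_map_onI:
  assumes "\<And>p q r. p \<in> Y \<Longrightarrow> q \<in> Y \<Longrightarrow> r \<in> Y \<Longrightarrow>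
      fst (S (fst (S (p, snd (S (q, r)))), fst (S (q, r)))) = fst (S (p, q))"
    and "\<And>p q r. p \<in> Y \<Longrightarrow> q \<in> Y \<Longrightarrow> r \<in> Y \<Longrightarrow>
      snd (S (fst (S (p, snd (S (q, r)))), fst (S (q, r)))) = fst (S (snd (S (p, q)), r))"
    and "\<And>p q r. p \<in> Y \<Longrightarrow> q \<in> Y \<Longrightarrow> r \<in> Y \<Longrightarrow>
      snd (S (p, snd (S (q, r)))) = snd (S (snd (S (p, q)), r))"
  shows "pentagon_map_on Y S"
  using assms by (simp add: pentagon_map_on_def S12_def S13_def S23_def case_prod_beta prod_eq_iff)

locale Smap_setting =
  fixes Xs :: "'a::field set"
    and f :: "'a \<Rightarrow> 'a \<Rightarrow> 'a"
    and g :: "'a \<Rightarrow> 'a"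
  assumes nonzero: "0 \<notin> Xs"
    and g_bij: "bij_betw g Xs Xs"
    and f_maps: "\<And>x X. x \<in> Xs \<Longrightarrow> X \<in> Xs \<Longrightarrow> f x X \<in> Xs"
    and welldef: "\<And>x X y Y. x \<in> Xs \<Longrightarrow> X \<in> Xs \<Longrightarrow> y \<in> Xs \<Longrightarrow> Y \<in> Xs \<Longrightarrow>
        X * g y \<in> Xs \<and> X * Y \<in> Xs \<and>
        g x / f (inv_into Xs g (X * g y)) (X * Y) \<in> Xs \<and>
        X * f y Y / f (inv_into Xs g (X * g y)) (X * Y) \<in> Xs"
    and f_rel: "\<And>x X y Y u U v V. x \<in> Xs \<Longrightarrow> X \<in> Xs \<Longrightarrow> y \<in> Xs \<Longrightarrow> Y \<in> Xs \<Longrightarrow>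
        Smap Xs f g ((x, X), (y, Y)) = ((u, U), (v, V)) \<Longrightarrow>
        f u U * f v V = f x X"
begin

abbreviation ginv :: "'a \<Rightarrow> 'a" where
  "ginv \<equiv> inv_into Xs g"

definition Ssnd :: "'a \<times> 'a \<Rightarrow> 'a \<times> 'a \<Rightarrow> 'a \<times> 'a" where
  "Ssnd p q = (ginv (snd p * g (fst q)), snd p * snd q)"

definition Sfst :: "'a \<times> 'a \<Rightarrow> 'a \<times> 'a \<Rightarrow> 'a \<times> 'a" where
  "Sfst p q = (ginv (g (fst p) / case_prod f (Ssnd p q)),
               snd p * case_prod f q / case_prod f (Ssnd p q))"

lemma Smap_eq: "Smap Xs f g (p, q) = (Sfst p q, Ssnd p q)"
  by (simp add: Smap_def Sfst_def Ssnd_def Let_def split: prod.split)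

lemma g_ginv: "z \<in> Xs \<Longrightarrow> g (ginv z) = z"
  using g_bij by (simp add: bij_betw_def f_inv_into_f)

lemma ginv_in: "z \<in> Xs \<Longrightarrow> ginv z \<in> Xs"
  using g_bij by (simp add: bij_betw_def inv_into_into)

lemma f_nonzero: "p \<in> Xs \<times> Xs \<Longrightarrow> case_prod f p \<noteq> 0"
  using f_maps nonzero by fastforce

lemma Ssnd_in:
  assumes "p \<in> Xs \<times> Xs" "q \<in> Xs \<times> Xs"
  shows "Ssnd p q \<in> Xs \<times> Xs"
  using assms welldef ginv_in by (auto simp: Ssnd_def)

lemma Sfst_in:
  assumes "p \<in> Xs \<times> Xs" "q \<in> Xs \<times> Xs"
  shows "Sfst p q \<in> Xs \<times> Xs"
  using assms welldef ginv_in by (auto simp: Sfst_def Ssnd_def)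

lemma g_fst_Ssnd:
  assumes "p \<in> Xs \<times> Xs" "q \<in> Xs \<times> Xs"
  shows "g (fst (Ssnd p q)) = snd p * g (fst q)"
  using assms welldef g_ginv by (auto simp: Ssnd_def)

lemma g_fst_Sfst:
  assumes "p \<in> Xs \<times> Xs" "q \<in> Xs \<times> Xs"
  shows "g (fst (Sfst p q)) = g (fst p) / case_prod f (Ssnd p q)"
  using assms welldef g_ginv by (auto simp: Sfst_def Ssnd_def)

lemma f_Sfst_Ssnd:
  assumes "p \<in> Xs \<times> Xs" "q \<in> Xs \<times> Xs"
  shows "case_prod f (Sfst p q) * case_prod f (Ssnd p q) = case_prod f p"
proof -
  obtain x X y Y where pq: "p = (x, X)" "q = (y, Y)" by fastforce
  obtain u U v V where uv: "Sfst p q = (u, U)" "Ssnd p q = (v, V)" by fastforce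
  have "Smap Xs f g ((x, X), (y, Y)) = ((u, U), (v, V))"
    using Smap_eq pq uv by simp
  then have "f u U * f v V = f x X"
    using assms pq by (intro f_rel) auto
  then show ?thesis
    using pq uv by simp
qed

lemma Ssnd_assoc:
  assumes "p \<in> Xs \<times> Xs" "q \<in> Xs \<times> Xs" "r \<in> Xs \<times> Xs"
  shows "Ssnd p (Ssnd q r) = Ssnd (Ssnd p q) r"
proof -
  have "Ssnd p (Ssnd q r) = (ginv (snd p * (snd q * g (fst r))), snd p * (snd q * snd r))"
    using g_fst_Ssnd[OF assms(2,3)] by (simp add: Ssnd_def)
  then show ?thesis
    by (simp add: Ssnd_def mult.assoc)
qed

lemma Ssnd_Sfst_Sfst:
  assumes p: "p \<in> Xs \<times> Xs" and q: "q \<in> Xs \<times> Xs" and r: "r \<in> Xs \<times> Xs"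
  shows "Ssnd (Sfst p (Ssnd q r)) (Sfst q r) = Sfst (Ssnd p q) r"
proof -
  define d where "d = Ssnd q r"
  define w where "w = Ssnd p d"
  have d_in: "d \<in> Xs \<times> Xs"
    using Ssnd_in q r by (simp add: d_def)
  have w_eq: "Ssnd (Ssnd p q) r = w"
    using Ssnd_assoc[OF p q r] by (simp add: w_def d_def)
  have "snd (Sfst p d) * g (fst (Sfst q r)) = snd p * g (fst q) / case_prod f w"
    using g_fst_Sfst[OF q r] f_nonzero[OF d_in]
    by (simp add: Sfst_def w_def d_def)
  moreover have "snd (Sfst p d) * snd (Sfst q r) = snd p * snd q * case_prod f r / case_prod f w"
    using f_nonzero[OF d_in] by (simp add: Sfst_def w_def d_def)
  ultimately show ?thesis
    using g_fst_Ssnd[OF p q] w_eq by (simp add: Ssnd_def Sfst_def d_def)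
qed

lemma Sfst_Sfst_Sfst:
  assumes p: "p \<in> Xs \<times> Xs" and q: "q \<in> Xs \<times> Xs" and r: "r \<in> Xs \<times> Xs"
  shows "Sfst (Sfst p (Ssnd q r)) (Sfst q r) = Sfst p q"
proof -
  define d where "d = Ssnd q r"
  define v where "v = Ssnd p q"
  define w where "w = Ssnd p d"
  define m where "m = Sfst v r"
  have d_in: "d \<in> Xs \<times> Xs" and v_in: "v \<in> Xs \<times> Xs" and w_in: "w \<in> Xs \<times> Xs"
    using Ssnd_in p q r by (simp_all add: d_def v_def w_def)
  have m_in: "m \<in> Xs \<times> Xs"
    using Sfst_in v_in r by (simp add: m_def)
  have f_m: "case_prod f m * case_prod f w = case_prod f v"
    using f_Sfst_Ssnd[OF v_in r] Ssnd_assoc[OF p q r] by (simp add: m_def v_def w_def d_def)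
  have f_c: "case_prod f (Sfst q r) * case_prod f d = case_prod f q"
    using f_Sfst_Ssnd[OF q r] by (simp add: d_def)
  have Ssnd_m: "Ssnd (Sfst p d) (Sfst q r) = m"
    using Ssnd_Sfst_Sfst[OF p q r] by (simp add: d_def m_def v_def)
  have "Sfst (Sfst p d) (Sfst q r) = (ginv (g (fst (Sfst p d)) / case_prod f m),
      snd (Sfst p d) * case_prod f (Sfst q r) / case_prod f m)"
    unfolding Sfst_def[of "Sfst p d"] Ssnd_m ..
  also have "g (fst (Sfst p d)) / case_prod f m = g (fst p) / case_prod f v"
    using g_fst_Sfst[OF p d_in] f_nonzero[OF w_in] f_nonzero[OF m_in]
    by (simp add: f_m[symmetric] w_def field_simps)
  also have "snd (Sfst p d) * case_prod f (Sfst q r) / case_prod f m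
      = snd p * case_prod f q / case_prod f v"
    using f_nonzero[OF w_in] f_nonzero[OF m_in]
    by (simp add: f_m[symmetric] f_c[symmetric] Sfst_def[of p] w_def field_simps)
  finally show ?thesis
    by (simp add: Sfst_def[of p q] d_def v_def)
qed

lemma Smap_pentagon: "pentagon_map_on (Xs \<times> Xs) (Smap Xs f g)"
  by (rule pentagon_map_onI)
    (simp_all add: Smap_eq Sfst_Sfst_Sfst Ssnd_Sfst_Sfst Ssnd_assoc)

end

theorem mainTheorem7:
  fixes Xs :: "'a::field set"
    and f :: "'a \<Rightarrow> 'a \<Rightarrow> 'a"
    and g :: "'a \<Rightarrow> 'a"
  assumes nonzero: "0 \<notin> Xs"
    and g_bij: "bij_betw g Xs Xs"
    and f_maps: "\<And>x X. x \<in> Xs \<Longrightarrow> X \<in> Xs \<Longrightarrow> f x X \<in> Xs"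
    and welldef: "\<And>x X y Y. x \<in> Xs \<Longrightarrow> X \<in> Xs \<Longrightarrow> y \<in> Xs \<Longrightarrow> Y \<in> Xs \<Longrightarrow>
        X * g y \<in> Xs \<and> X * Y \<in> Xs \<and>
        g x / f (inv_into Xs g (X * g y)) (X * Y) \<in> Xs \<and>
        X * f y Y / f (inv_into Xs g (X * g y)) (X * Y) \<in> Xs"
    and f_rel: "\<And>x X y Y u U v V. x \<in> Xs \<Longrightarrow> X \<in> Xs \<Longrightarrow> y \<in> Xs \<Longrightarrow> Y \<in> Xs \<Longrightarrow>
        Smap Xs f g ((x, X), (y, Y)) = ((u, U), (v, V)) \<Longrightarrow>
        f u U * f v V = f x X"
  shows "pentagon_map_on (Xs \<times> Xs) (Smap Xs f g)"
proof -
  interpret Smap_setting Xs f g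
    using assms by unfold_locales
  show ?thesis
    by (rule Smap_pentagon)
qed

end
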